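(* Let $d\ge 2$ be even, let $\widetilde{d}\ge 1$, let $u^*\in\mathbb{R}^{\widetilde{d}}$ with $\|u^*\|=1$, and let $\eta$ be a noise parameter with $0\le \eta < \frac{1}{10d}$. Let $\mathcal{D}$ be the distribution on $\mathbb{R}^{\widetilde{d}d}\times\{\pm1\}$ described in the context. Then there exists a max-margin classifier $\nu^*$ for $\mathcal{D}$, i.e. a probability distribution $$\nu^*\in\arg\max_{\nu\in\mathcal{P}(\mathbb{S}^{d\widetilde{d}+1})}\ \min_{(x,y)\in\operatorname{supp}(\mathcal{D})} y\cdot f(\nu,x),$$ such that for every $(x,y)$ in the support of $\mathcal{D}$ there is a constant $c>0$ with (i) $\big\|(\nabla_x \mathcal{L}(\nu^*,(x,y)))_j\big\| = c$ for every $j\in\{1,\dots,d/2\}$, and (ii) $\big\|(\nabla_x \mathcal{L}(\nu^*,(x,y)))_j\big\| = 0$ for every $j\in\{d/2+1,\dots,d\}$, where $(v)_j\in\mathbb{R}^{\widetilde{d}}$ denotes the $j$-th block of a vector $v\in\mathbb{R}^{\widetilde{d}d}$ viewed as a concatenation of $d$ blocks of dimension $\widetilde{d}$.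
   Context: Data distribution $\mathcal{D}$: a sample $(x,y)$ is generated by drawing $y\in\{+1,-1\}$ with probability $1/2$ each, drawing an index $j$ uniformly at random from $\{1,\dots,d/2\}$, drawing $g_1,\dots,g_d\in\mathbb{R}^{\widetilde{d}}$ independently and uniformly from the Euclidean unit ball, and setting $x=(x_1,\dots,x_d)\in\mathbb{R}^{\widetilde{d}d}$ (concatenation of blocks $x_i\in\mathbb{R}^{\widetilde{d}}$) with $x_j = y u^* + \eta g_j$ and $x_i=\eta g_i$ for $i\neq j$. Infinite-width one-hidden-layer ReLU network: a network is a probability distribution $\nu$ over parameters $(w,r,b)\in\mathbb{R}\times\mathbb{R}^{\widetilde{d}d}\times\mathbb{R}$, with output $f(\nu,x)=\mathbb{E}_{(w,r,b)\sim\nu}[w\,\phi(\langle r,x\rangle+b)]$ where $\phi(t)=\max(t,0)$, and cross-entropy loss $\mathcal{L}(\nu,(x,y))=\log(1+\exp(-y f(\nu,x)))$. $\mathbb{S}^{d\widetilde{d}+1}$ is the Euclidean unit sphere in $\mathbb{R}^{\widetilde{d}d+2}$ (the parameter space of $(w,r,b)$), and $\mathcal{P}(\mathbb{S}^{d\widetilde{d}+1})$ is the set of probability distributions supported on it. $\nabla_x\mathcal{L}$ denotes the gradient of the loss with respect to the input $x$. *)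

theory Defs
  imports "HOL-Probability.Probability"
begin

text \<open>A vector of \<open>\<real>^(dt*d)\<close> is a function \<open>x :: nat \<Rightarrow> real\<close>
  using coordinates \<open>0..<dt*d\<close>; block \<open>j\<close> (1-based, \<open>1 \<le> j \<le> d\<close>) consists of the
  coordinates \<open>(j-1)*dt + k\<close>, \<open>k < dt\<close>.
  A parameter \<open>(w,r,b) \<in> \<real>^(dt*d+2)\<close> is a function \<open>\<theta> :: nat \<Rightarrow> real\<close> on \<open>0..<dt*d+2\<close>
  with \<open>w = \<theta> 0\<close>, \<open>r_n = \<theta> (Suc n)\<close> for \<open>n < dt*d\<close>, \<open>b = \<theta> (dt*d+1)\<close>.\<close>

definition relu :: "real \<Rightarrow> real" where
  "relu t = max t 0"

definition relu' :: "real \<Rightarrow> real" where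
  "relu' t = (if t > 0 then 1 else 0)"

definition block_norm :: "nat \<Rightarrow> (nat \<Rightarrow> real) \<Rightarrow> nat \<Rightarrow> real" where
  "block_norm dt v j = sqrt (\<Sum>k<dt. (v ((j - 1) * dt + k))\<^sup>2)"

definition preact :: "nat \<Rightarrow> (nat \<Rightarrow> real) \<Rightarrow> (nat \<Rightarrow> real) \<Rightarrow> real" where
  "preact N \<theta> x = (\<Sum>n<N. \<theta> (Suc n) * x n) + \<theta> (Suc N)"

definition param_space :: "nat \<Rightarrow> (nat \<Rightarrow> real) measure" where
  "param_space N = PiM {..<N + 2} (\<lambda>_. lborel)"

definition networks :: "nat \<Rightarrow> (nat \<Rightarrow> real) measure set" where
  "networks N = {\<nu>. sets \<nu> = sets (param_space N) \<and> prob_space \<nu> \<and>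
      (AE \<theta> in \<nu>. (\<Sum>i<N + 2. (\<theta> i)\<^sup>2) = 1)}"

definition net_out :: "nat \<Rightarrow> (nat \<Rightarrow> real) measure \<Rightarrow> (nat \<Rightarrow> real) \<Rightarrow> real" where
  "net_out N \<nu> x = (\<integral>\<theta>. \<theta> 0 * relu (preact N \<theta> x) \<partial>\<nu>)"

definition ce_loss :: "nat \<Rightarrow> (nat \<Rightarrow> real) measure \<Rightarrow> (nat \<Rightarrow> real) \<Rightarrow> real \<Rightarrow> real" where
  "ce_loss N \<nu> x y = ln (1 + exp (- y * net_out N \<nu> x))"

text \<open>Gradient of the loss w.r.t. the input, coordinate \<open>n\<close> (chain rule with the ReLU
  derivative convention \<open>relu'\<close>):
  \<open>\<nabla>_x L = -y \<sigma>(-y f) E[w \<phi>'(\<langle>r,x\<rangle>+b) r]\<close>.\<close>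
definition loss_grad :: "nat \<Rightarrow> (nat \<Rightarrow> real) measure \<Rightarrow> (nat \<Rightarrow> real) \<Rightarrow> real \<Rightarrow> nat \<Rightarrow> real" where
  "loss_grad N \<nu> x y n =
     - y * (exp (- y * net_out N \<nu> x) / (1 + exp (- y * net_out N \<nu> x))) *
     (\<integral>\<theta>. \<theta> 0 * relu' (preact N \<theta> x) * \<theta> (Suc n) \<partial>\<nu>)"

text \<open>Support of the data distribution \<open>\<D>\<close> (uniform draws from the unit ball have
  the closed unit ball as support).\<close>
definition data_support ::
  "nat \<Rightarrow> nat \<Rightarrow> (nat \<Rightarrow> real) \<Rightarrow> real \<Rightarrow> ((nat \<Rightarrow> real) \<times> real) set" where
  "data_support d dt u \<eta> = {(x, y). (y = 1 \<or> y = -1) \<and>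
     (\<exists>j\<in>{1..d div 2}. \<exists>g :: nat \<Rightarrow> nat \<Rightarrow> real.
        (\<forall>i\<in>{1..d}. sqrt (\<Sum>k<dt. (g i k)\<^sup>2) \<le> 1) \<and>
        (\<forall>i\<in>{1..d}. \<forall>k<dt. x ((i - 1) * dt + k) = (if i = j then y * u k else 0) + \<eta> * g i k)) \<and>
     (\<forall>n\<ge>dt * d. x n = 0)}"

definition margin :: "nat \<Rightarrow> nat \<Rightarrow> (nat \<Rightarrow> real) \<Rightarrow> real \<Rightarrow> (nat \<Rightarrow> real) measure \<Rightarrow> real" where
  "margin d dt u \<eta> \<nu> = (INF p\<in>data_support d dt u \<eta>. snd p * net_out (dt * d) \<nu> (fst p))"

definition max_margin :: "nat \<Rightarrow> nat \<Rightarrow> (nat \<Rightarrow> real) \<Rightarrow> real \<Rightarrow> (nat \<Rightarrow> real) measure \<Rightarrow> bool" where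
  "max_margin d dt u \<eta> \<nu> \<longleftrightarrow> \<nu> \<in> networks (dt * d) \<and>
     (\<forall>\<mu>\<in>networks (dt * d). margin d dt u \<eta> \<mu> \<le> margin d dt u \<eta> \<nu>)"

end

theory Submission
  imports Defs
begin

text \<open>Write \<open>m = d/2\<close>, \<open>\<tau> = 1 - m \<eta>\<close> and \<open>\<gamma> = \<tau> / (2 sqrt (m + \<tau>\<^sup>2))\<close>;
  \<open>\<gamma>\<close> is the maximal margin.

  Upper bound: the probes \<open>\<plusminus>(e\<^sub>j - \<eta> (1, \<dots>, 1)) \<otimes> u\<close> on the first \<open>m\<close> blocks lie in
  the support, so \<open>2m\<close> times the margin of any network is at most the average over its
  neurons \<open>(w, r, b)\<close> of \<open>w \<Sum>\<^sub>j (\<phi>(s\<^sub>j + b) - \<phi>(b - s\<^sub>j))\<close>, where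
  \<open>s\<^sub>j = a\<^sub>j - \<eta> \<Sum>\<^sub>i a\<^sub>i\<close> and \<open>a\<^sub>j = \<langle>r\<^sub>j, u\<rangle>\<close> is the correlation of block \<open>j\<close> of \<open>r\<close>
  with \<open>u\<close>. For a unit neuron this is at most \<open>2 m \<gamma>\<close>: if \<open>b \<ge> 0\<close>, bound each term by
  \<open>s + [s > 0] (\<kappa> b + (1 - \<kappa>) s)\<close> and apply Cauchy--Schwarz, where
  \<open>\<kappa> = 2 \<tau>\<^sup>2 / (m + \<tau>\<^sup>2)\<close> makes the estimate tight; if \<open>b < 0\<close> a crude bound suffices
  because \<open>m \<eta> \<le> 1/20\<close>.

  Lower bound: if \<open>U\<close> repeats \<open>u\<close> on the first \<open>m\<close> blocks, then \<open>y \<langle>U, x\<rangle> \<ge> \<tau>\<close> on the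
  support, so the two neurons \<open>\<plusminus>(w, \<alpha> U)\<close> with common bias \<open>\<alpha> \<tau>\<close> reach the margin
  \<open>w \<alpha> \<tau> = \<gamma>\<close> for \<open>w = 1/\<surd>2\<close>, \<open>\<alpha> = 1/\<surd>(2 (m + \<tau>\<^sup>2))\<close>. On the support exactly one
  of the two neurons is active, so the input gradient of the loss is a nonzero multiple of
  \<open>U\<close>, whose block norms are \<open>1\<close> on the first \<open>m\<close> blocks and \<open>0\<close> on the others.\<close>

definition relu_gap :: "real \<Rightarrow> real \<Rightarrow> real" where
  "relu_gap s b = relu (s + b) - relu (b - s)"

lemma relu_gap_uminus: "relu_gap (- s) b = - relu_gap s b"
  unfolding relu_gap_def by (simp add: algebra_simps)

lemma sign_mult_relu_gap: "y = 1 \<or> y = -1 \<Longrightarrow> y * relu_gap s b = relu_gap (y * s) b"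
  using relu_gap_uminus[of s b] by auto

lemma relu_gap_eq_add: "0 \<le> b \<Longrightarrow> b \<le> s \<Longrightarrow> relu_gap s b = s + b"
  unfolding relu_gap_def relu_def by auto

lemma relu_gap_le_interpolation:
  assumes b: "0 \<le> b" and \<kappa>: "0 \<le> \<kappa>" "\<kappa> \<le> 1"
  shows "relu_gap s b \<le> s + (if s > 0 then 1 else 0) * (\<kappa> * b + (1 - \<kappa>) * s)"
proof (cases "s > 0")
  case True
  show ?thesis
  proof (cases "s \<le> b")
    case True
    have "\<kappa> * s \<le> \<kappa> * b" using True \<kappa> by (simp add: mult_left_mono)
    thus ?thesis using True \<open>s > 0\<close> b unfolding relu_gap_def relu_def by (simp add: algebra_simps)
  next
    case False
    have "(1 - \<kappa>) * b \<le> (1 - \<kappa>) * s" using False \<kappa> by (intro mult_left_mono) auto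
    thus ?thesis using False \<open>s > 0\<close> b unfolding relu_gap_def relu_def by (simp add: algebra_simps)
  qed
next
  case False
  thus ?thesis using b unfolding relu_gap_def relu_def by (auto simp: max_def)
qed

lemma relu_gap_le_abs: "b < 0 \<Longrightarrow> relu_gap s b \<le> \<bar>s\<bar>"
  unfolding relu_gap_def relu_def by (auto simp: max_def)

lemma relu'_add_relu'_reflect: "0 < b \<Longrightarrow> b \<le> \<bar>s\<bar> \<Longrightarrow> relu' (s + b) + relu' (b - s) = 1"
  unfolding relu'_def by auto

lemma power2_add_le_mult_add:
  fixes U V E F R B :: real
  assumes U: "U\<^sup>2 \<le> E * R" and V: "V\<^sup>2 \<le> F * B"
    and nonneg: "0 \<le> E" "0 \<le> F" "0 \<le> R" "0 \<le> B"
  shows "(U + V)\<^sup>2 \<le> (E + F) * (R + B)"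
proof -
  have "(2 * U * V)\<^sup>2 = 4 * (U\<^sup>2 * V\<^sup>2)" by algebra
  also have "\<dots> \<le> 4 * ((E * R) * (F * B))"
    using mult_mono[OF U V] nonneg by simp
  also have "\<dots> = (E * B + F * R)\<^sup>2 - (E * B - F * R)\<^sup>2" by algebra
  also have "\<dots> \<le> (E * B + F * R)\<^sup>2" by simp
  finally have "2 * U * V \<le> E * B + F * R"
    by (rule power2_le_imp_le) (use nonneg in simp)
  moreover have "(U + V)\<^sup>2 = U\<^sup>2 + V\<^sup>2 + 2 * U * V" by (rule power2_sum)
  moreover have "(E + F) * (R + B) = E * R + F * B + (E * B + F * R)" by algebra
  ultimately show ?thesis using U V by linarith
qed

definition optimal_margin :: "real \<Rightarrow> real \<Rightarrow> real" where
  "optimal_margin M \<eta> = (1 - M * \<eta>) / (2 * sqrt (M + (1 - M * \<eta>)\<^sup>2))"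

text \<open>Squared norm of the Cauchy--Schwarz weight vector in \<open>relu_gap_sum_le_nonneg_bias\<close>
  when \<open>p\<close> of the \<open>M\<close> gaps are positive; \<open>\<kappa>\<close> is the parameter of
  \<open>relu_gap_le_interpolation\<close>, chosen so that the bound is attained at \<open>p = M\<close>.\<close>
definition weight_norm2 :: "real \<Rightarrow> real \<Rightarrow> real \<Rightarrow> real" where
  "weight_norm2 M \<eta> p =
     (let \<tau> = 1 - M * \<eta>; \<kappa> = 2 * \<tau>\<^sup>2 / (M + \<tau>\<^sup>2); c = \<tau> - (1 - \<kappa>) * p * \<eta>
      in (M - p) * c\<^sup>2 + p * (c + (1 - \<kappa>))\<^sup>2 + \<kappa>\<^sup>2 * p\<^sup>2)"

lemma optimal_margin_nonneg: "0 \<le> M \<Longrightarrow> M * \<eta> \<le> 1 \<Longrightarrow> 0 \<le> optimal_margin M \<eta>"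
  unfolding optimal_margin_def by simp

lemma power2_optimal_margin:
  assumes "0 < M"
  shows "(4 * M * optimal_margin M \<eta>)\<^sup>2 = 4 * M\<^sup>2 * (1 - M * \<eta>)\<^sup>2 / (M + (1 - M * \<eta>)\<^sup>2)"
  unfolding optimal_margin_def using assms
  by (simp add: power_divide power_mult_distrib power2_eq_square add_pos_nonneg)

lemma weight_norm2_top:
  assumes "0 < M"
  shows "weight_norm2 M \<eta> M = (4 * M * optimal_margin M \<eta>)\<^sup>2"
proof -
  define \<tau> where "\<tau> = 1 - M * \<eta>"
  define \<kappa> where "\<kappa> = 2 * \<tau>\<^sup>2 / (M + \<tau>\<^sup>2)"
  have pos: "0 < M + \<tau>\<^sup>2" using assms by (simp add: add_pos_nonneg)
  have "\<tau> - (1 - \<kappa>) * M * \<eta> + (1 - \<kappa>) = \<tau> * (2 - \<kappa>)" unfolding \<tau>_def by (simp add: algebra_simps)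
  hence "weight_norm2 M \<eta> M = M * (\<tau> * (2 - \<kappa>))\<^sup>2 + \<kappa>\<^sup>2 * M\<^sup>2"
    unfolding weight_norm2_def Let_def \<tau>_def[symmetric] \<kappa>_def[symmetric] by simp
  also have "2 - \<kappa> = 2 * M / (M + \<tau>\<^sup>2)" unfolding \<kappa>_def using pos by (simp add: field_simps)
  also have "M * (\<tau> * (2 * M / (M + \<tau>\<^sup>2)))\<^sup>2 + \<kappa>\<^sup>2 * M\<^sup>2 = 4 * M\<^sup>2 * \<tau>\<^sup>2 * (M + \<tau>\<^sup>2) / (M + \<tau>\<^sup>2)\<^sup>2"
    unfolding \<kappa>_def using pos
    by (simp add: power_divide add_divide_distrib algebra_simps power2_eq_square)
  also have "\<dots> = (4 * M * optimal_margin M \<eta>)\<^sup>2"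
    unfolding power2_optimal_margin[OF assms] \<tau>_def[symmetric] using pos by (simp add: power2_eq_square)
  finally show ?thesis .
qed

lemma weight_norm2_le_top:
  assumes M: "1 \<le> M" and \<eta>: "0 \<le> \<eta>" "20 * M * \<eta> < 1" and p: "0 \<le> p" "p \<le> M"
  shows "weight_norm2 M \<eta> p \<le> weight_norm2 M \<eta> M"
proof -
  define \<tau> where "\<tau> = 1 - M * \<eta>"
  define \<kappa> where "\<kappa> = 2 * \<tau>\<^sup>2 / (M + \<tau>\<^sup>2)"
  define \<mu> where "\<mu> = 1 - \<kappa>"
  have \<tau>: "19/20 \<le> \<tau>" "\<tau> \<le> 1" "M * \<eta> \<le> 1/20" using M \<eta> unfolding \<tau>_def by auto
  have "\<tau>\<^sup>2 \<le> 1" using \<tau> by (simp add: power_le_one)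
  moreover have "0 < M + \<tau>\<^sup>2" using M by (simp add: add_pos_nonneg)
  ultimately have \<mu>: "0 \<le> \<mu>" "\<mu> \<le> 1" unfolding \<mu>_def \<kappa>_def using M by (auto simp: field_simps)
  have W: "weight_norm2 M \<eta> q = (M - q) * (\<tau> - \<mu> * q * \<eta>)\<^sup>2 + q * (\<tau> - \<mu> * q * \<eta> + \<mu>)\<^sup>2 + \<kappa>\<^sup>2 * q\<^sup>2" for q
    unfolding weight_norm2_def Let_def \<tau>_def \<kappa>_def \<mu>_def by (rule refl)
  have \<mu>\<tau>: "0 \<le> 2 * \<tau> + \<mu> - 2 * \<tau> * (M * \<eta>) - 4 * \<mu> * (M * \<eta>)"
  proof -
    have "\<tau> * (M * \<eta>) \<le> 1 * (1/20)" using \<tau> M \<eta> by (intro mult_mono) auto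
    moreover have "\<mu> * (M * \<eta>) \<le> 1 * (1/20)" using \<tau> \<mu> M \<eta> by (intro mult_mono) auto
    ultimately show ?thesis using \<tau> \<mu> by linarith
  qed
  \<comment> \<open>the difference factors as \<open>(M - p)\<close> times a quantity that is positive because \<open>M \<eta>\<close> is small\<close>
  have "0 \<le> (M - p) * (\<mu> * (2 * \<tau> + \<mu> - 2 * \<tau> * (M * \<eta>) - 4 * \<mu> * (M * \<eta>)))"
    using p \<mu> \<mu>\<tau> by simp
  also have "\<dots> \<le> (M - p) * (\<mu> * (2 * \<tau> + \<mu>) - 2 * \<tau> * \<mu> * (M * \<eta>)
      + (M * \<mu>\<^sup>2 * \<eta>\<^sup>2 - 2 * \<mu>\<^sup>2 * \<eta> + \<kappa>\<^sup>2) * (M + p))"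
  proof (rule mult_left_mono)
    have "- (2 * \<mu>\<^sup>2 * \<eta>) * (M + p) \<le> (M * \<mu>\<^sup>2 * \<eta>\<^sup>2 - 2 * \<mu>\<^sup>2 * \<eta> + \<kappa>\<^sup>2) * (M + p)"
      using M \<eta> p by (intro mult_right_mono) auto
    moreover have "(2 * \<mu>\<^sup>2 * \<eta>) * (M + p) \<le> (2 * \<mu>\<^sup>2 * \<eta>) * (2 * M)"
      using \<eta> p by (intro mult_left_mono) auto
    ultimately show "\<mu> * (2 * \<tau> + \<mu> - 2 * \<tau> * (M * \<eta>) - 4 * \<mu> * (M * \<eta>))
        \<le> \<mu> * (2 * \<tau> + \<mu>) - 2 * \<tau> * \<mu> * (M * \<eta>)
          + (M * \<mu>\<^sup>2 * \<eta>\<^sup>2 - 2 * \<mu>\<^sup>2 * \<eta> + \<kappa>\<^sup>2) * (M + p)"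
      by (simp add: power2_eq_square algebra_simps)
  qed (use p in simp)
  also have "\<dots> = weight_norm2 M \<eta> M - weight_norm2 M \<eta> p"
    unfolding W by (simp add: power2_eq_square algebra_simps)
  finally show ?thesis by simp
qed

lemma Cauchy_Schwarz_two_valued_weights:
  fixes a pos :: "nat \<Rightarrow> real" and b c \<kappa> \<mu> :: real
  assumes pos: "\<And>j. pos j = 0 \<or> pos j = 1"
  shows "((\<Sum>j<m. (c + \<mu> * pos j) * a j) + \<kappa> * (\<Sum>j<m. pos j) * b)\<^sup>2
    \<le> ((m - (\<Sum>j<m. pos j)) * c\<^sup>2 + (\<Sum>j<m. pos j) * (c + \<mu>)\<^sup>2 + \<kappa>\<^sup>2 * (\<Sum>j<m. pos j)\<^sup>2)
      * ((\<Sum>j<m. (a j)\<^sup>2) + b\<^sup>2)"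
proof -
  define p where "p = (\<Sum>j<m. pos j)"
  have "(\<Sum>j<m. (c + \<mu> * pos j)\<^sup>2) = (\<Sum>j<m. c\<^sup>2 + pos j * ((c + \<mu>)\<^sup>2 - c\<^sup>2))"
  proof (intro sum.cong refl)
    fix j show "(c + \<mu> * pos j)\<^sup>2 = c\<^sup>2 + pos j * ((c + \<mu>)\<^sup>2 - c\<^sup>2)" using pos[of j] by auto
  qed
  also have "\<dots> = m * c\<^sup>2 + p * ((c + \<mu>)\<^sup>2 - c\<^sup>2)"
    unfolding p_def by (simp add: sum.distrib sum_distrib_right)
  finally have "(\<Sum>j<m. (c + \<mu> * pos j)\<^sup>2) + (\<kappa> * p)\<^sup>2 = (m - p) * c\<^sup>2 + p * (c + \<mu>)\<^sup>2 + \<kappa>\<^sup>2 * p\<^sup>2"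
    by (simp add: power_mult_distrib algebra_simps)
  moreover have "((\<Sum>j<m. (c + \<mu> * pos j) * a j) + \<kappa> * p * b)\<^sup>2
      \<le> ((\<Sum>j<m. (c + \<mu> * pos j)\<^sup>2) + (\<kappa> * p)\<^sup>2) * ((\<Sum>j<m. (a j)\<^sup>2) + b\<^sup>2)"
    using Cauchy_Schwarz_ineq_sum[of "\<lambda>j. c + \<mu> * pos j" a "{..<m}"]
    by (intro power2_add_le_mult_add) (auto simp: power_mult_distrib intro: sum_nonneg)
  ultimately show ?thesis unfolding p_def by simp
qed

lemma relu_gap_sum_le_nonneg_bias:
  fixes m :: nat and \<eta> b :: real and a :: "nat \<Rightarrow> real"
  assumes m: "1 \<le> m" and \<eta>: "0 \<le> \<eta>" "20 * m * \<eta> < 1" and b: "0 \<le> b"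
  shows "(\<Sum>j<m. relu_gap (a j - \<eta> * (\<Sum>i<m. a i)) b)
    \<le> 4 * m * optimal_margin m \<eta> * sqrt ((\<Sum>j<m. (a j)\<^sup>2) + b\<^sup>2)"
proof -
  define A where "A = (\<Sum>i<m. a i)"
  define s where "s j = a j - \<eta> * A" for j
  define \<tau> where "\<tau> = 1 - m * \<eta>"
  define \<kappa> where "\<kappa> = 2 * \<tau>\<^sup>2 / (m + \<tau>\<^sup>2)"
  define \<mu> where "\<mu> = 1 - \<kappa>"
  define pos where "pos j = (if s j > 0 then 1 else 0 :: real)" for j
  define p where "p = (\<Sum>j<m. pos j)"
  define c where "c = \<tau> - \<mu> * p * \<eta>"
  define R where "R = (\<Sum>j<m. (a j)\<^sup>2) + b\<^sup>2"
  have "\<tau>\<^sup>2 \<le> 1" using m \<eta> unfolding \<tau>_def by (simp add: power_le_one)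
  moreover have "0 < real m + \<tau>\<^sup>2" using m by (simp add: add_pos_nonneg)
  ultimately have \<kappa>: "0 \<le> \<kappa>" "\<kappa> \<le> 1" unfolding \<kappa>_def using m by (auto simp: field_simps)
  have "0 \<le> p" "p \<le> m"
    unfolding p_def pos_def using sum_mono[of "{..<m}" pos "\<lambda>_. 1"]
    by (auto simp: pos_def intro: sum_nonneg)
  hence "weight_norm2 m \<eta> p * R \<le> weight_norm2 m \<eta> m * R"
    unfolding R_def using m \<eta>
    by (intro mult_right_mono weight_norm2_le_top add_nonneg_nonneg sum_nonneg) auto
  have "(\<Sum>j<m. relu_gap (s j) b) \<le> (\<Sum>j<m. s j + pos j * (\<kappa> * b + \<mu> * s j))"
    unfolding pos_def \<mu>_def by (intro sum_mono relu_gap_le_interpolation b \<kappa>)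
  also have "\<dots> = (\<Sum>j<m. a j) - m * \<eta> * A + \<kappa> * b * p + \<mu> * (\<Sum>j<m. pos j * a j) - \<mu> * \<eta> * A * p"
    unfolding s_def p_def by (simp add: sum.distrib sum_subtractf sum_distrib_left algebra_simps)
  also have "\<dots> = (\<Sum>j<m. (c + \<mu> * pos j) * a j) + \<kappa> * p * b"
    unfolding c_def \<tau>_def A_def by (simp add: sum.distrib sum_subtractf sum_distrib_left algebra_simps)
  also have "\<dots> \<le> 4 * m * optimal_margin m \<eta> * sqrt R"
  proof (rule real_le_rsqrt[THEN order_trans])
    have "weight_norm2 m \<eta> p = (m - p) * c\<^sup>2 + p * (c + \<mu>)\<^sup>2 + \<kappa>\<^sup>2 * p\<^sup>2"
      unfolding weight_norm2_def Let_def c_def \<mu>_def \<kappa>_def \<tau>_def by (rule refl)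
    hence "((\<Sum>j<m. (c + \<mu> * pos j) * a j) + \<kappa> * p * b)\<^sup>2 \<le> weight_norm2 m \<eta> p * R"
      using Cauchy_Schwarz_two_valued_weights[where pos = pos and m = m and c = c and \<mu> = \<mu> and \<kappa> = \<kappa>]
      unfolding R_def p_def by (simp add: pos_def)
    also have "\<dots> \<le> weight_norm2 m \<eta> m * R" by fact
    also have "\<dots> = (4 * m * optimal_margin m \<eta>)\<^sup>2 * R" using m by (simp add: weight_norm2_top)
    finally show "((\<Sum>j<m. (c + \<mu> * pos j) * a j) + \<kappa> * p * b)\<^sup>2 \<le> (4 * m * optimal_margin m \<eta>)\<^sup>2 * R" .
    have "0 \<le> optimal_margin m \<eta>" using m \<eta> by (intro optimal_margin_nonneg) auto
    thus "sqrt ((4 * m * optimal_margin m \<eta>)\<^sup>2 * R) \<le> 4 * m * optimal_margin m \<eta> * sqrt R"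
      by (simp add: real_sqrt_mult)
  qed
  finally show ?thesis unfolding s_def A_def R_def .
qed

lemma relu_gap_sum_le_neg_bias:
  fixes m :: nat and \<eta> b :: real and a :: "nat \<Rightarrow> real"
  assumes m: "1 \<le> m" and \<eta>: "0 \<le> \<eta>" "20 * m * \<eta> < 1" and b: "b < 0"
  shows "(\<Sum>j<m. relu_gap (a j - \<eta> * (\<Sum>i<m. a i)) b)
    \<le> 4 * m * optimal_margin m \<eta> * sqrt ((\<Sum>j<m. (a j)\<^sup>2) + b\<^sup>2)"
proof -
  define A where "A = (\<Sum>i<m. a i)"
  define \<tau> where "\<tau> = 1 - m * \<eta>"
  define X where "X = (1 + m * \<eta>) * (\<Sum>j<m. \<bar>a j\<bar>)"
  have \<tau>: "19/20 \<le> \<tau>" "\<tau> \<le> 1" "m * \<eta> \<le> 1/20" using m \<eta> unfolding \<tau>_def by auto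
  have "(\<Sum>j<m. relu_gap (a j - \<eta> * A) b) \<le> (\<Sum>j<m. \<bar>a j\<bar> + \<eta> * \<bar>A\<bar>)"
  proof (rule sum_mono)
    fix j
    have "relu_gap (a j - \<eta> * A) b \<le> \<bar>a j - \<eta> * A\<bar>" using b by (rule relu_gap_le_abs)
    also have "\<dots> \<le> \<bar>a j\<bar> + \<eta> * \<bar>A\<bar>" using abs_triangle_ineq4[of "a j" "\<eta> * A"] \<eta> by (simp add: abs_mult)
    finally show "relu_gap (a j - \<eta> * A) b \<le> \<bar>a j\<bar> + \<eta> * \<bar>A\<bar>" .
  qed
  also have "\<dots> \<le> X"
    unfolding X_def A_def using \<eta> sum_abs[of a "{..<m}"]
    by (simp add: sum.distrib algebra_simps mult_left_mono)
  also have "X \<le> sqrt ((4 * m * optimal_margin m \<eta>)\<^sup>2 * ((\<Sum>j<m. (a j)\<^sup>2) + b\<^sup>2))"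
  proof (rule real_le_rsqrt)
    have "m * (1 + m * \<eta>)\<^sup>2 * (m + \<tau>\<^sup>2) \<le> m * (21/20)\<^sup>2 * (2 * m)"
      using \<tau> m \<eta> power_le_one[of \<tau> 2] by (intro mult_mono power_mono) auto
    also have "\<dots> \<le> 4 * m\<^sup>2 * (19/20)\<^sup>2" by (simp add: power2_eq_square)
    also have "\<dots> \<le> 4 * m\<^sup>2 * \<tau>\<^sup>2" using \<tau> by (intro mult_left_mono power_mono) auto
    finally have "m * (1 + m * \<eta>)\<^sup>2 \<le> (4 * m * optimal_margin m \<eta>)\<^sup>2"
      using m by (simp add: power2_optimal_margin \<tau>_def[symmetric] pos_le_divide_eq add_pos_nonneg)
    moreover have "X\<^sup>2 \<le> (\<Sum>j<m. (1 + m * \<eta>)\<^sup>2) * (\<Sum>j<m. \<bar>a j\<bar>\<^sup>2)"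
      using Cauchy_Schwarz_ineq_sum[of "\<lambda>_. 1 + m * \<eta>" "\<lambda>j. \<bar>a j\<bar>" "{..<m}"]
      unfolding X_def by (simp add: sum_distrib_left)
    ultimately show "X\<^sup>2 \<le> (4 * m * optimal_margin m \<eta>)\<^sup>2 * ((\<Sum>j<m. (a j)\<^sup>2) + b\<^sup>2)"
      by (auto intro!: mult_mono sum_nonneg elim!: order_trans)
  qed
  also have "\<dots> = 4 * m * optimal_margin m \<eta> * sqrt ((\<Sum>j<m. (a j)\<^sup>2) + b\<^sup>2)"
    using m \<eta> optimal_margin_nonneg[of m \<eta>] by (simp add: real_sqrt_mult)
  finally show ?thesis unfolding A_def .
qed

lemma abs_relu_gap_sum_le:
  fixes m :: nat and \<eta> b :: real and a :: "nat \<Rightarrow> real"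
  assumes m: "1 \<le> m" and \<eta>: "0 \<le> \<eta>" "20 * m * \<eta> < 1"
  shows "\<bar>\<Sum>j<m. relu_gap (a j - \<eta> * (\<Sum>i<m. a i)) b\<bar>
    \<le> 4 * m * optimal_margin m \<eta> * sqrt ((\<Sum>j<m. (a j)\<^sup>2) + b\<^sup>2)"
proof -
  have upper: "(\<Sum>j<m. relu_gap (a' j - \<eta> * (\<Sum>i<m. a' i)) b)
      \<le> 4 * m * optimal_margin m \<eta> * sqrt ((\<Sum>j<m. (a' j)\<^sup>2) + b\<^sup>2)" for a'
    using relu_gap_sum_le_nonneg_bias[OF assms] relu_gap_sum_le_neg_bias[OF assms]
    by (cases "0 \<le> b") auto
  have "(\<Sum>j<m. relu_gap (- a j - \<eta> * (\<Sum>i<m. - a i)) b) = - (\<Sum>j<m. relu_gap (a j - \<eta> * (\<Sum>i<m. a i)) b)"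
  proof -
    have "relu_gap (- a j - \<eta> * (\<Sum>i<m. - a i)) b = - relu_gap (a j - \<eta> * (\<Sum>i<m. a i)) b" for j
      using relu_gap_uminus[of "a j - \<eta> * (\<Sum>i<m. a i)" b] by (simp add: sum_negf)
    thus ?thesis by (simp add: sum_negf)
  qed
  with upper[of "\<lambda>j. - a j"] upper[of a] show ?thesis by simp
qed

lemma neuron_relu_gap_sum_le:
  fixes m :: nat and \<eta> w b :: real and a :: "nat \<Rightarrow> real"
  assumes m: "1 \<le> m" and \<eta>: "0 \<le> \<eta>" "20 * m * \<eta> < 1"
    and unit: "w\<^sup>2 + (\<Sum>j<m. (a j)\<^sup>2) + b\<^sup>2 \<le> 1"
  shows "w * (\<Sum>j<m. relu_gap (a j - \<eta> * (\<Sum>i<m. a i)) b) \<le> 2 * m * optimal_margin m \<eta>"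
proof -
  define R where "R = (\<Sum>j<m. (a j)\<^sup>2) + b\<^sup>2"
  define C where "C = 4 * m * optimal_margin m \<eta>"
  have R: "0 \<le> R" unfolding R_def by (intro add_nonneg_nonneg sum_nonneg) auto
  have C: "0 \<le> C" unfolding C_def using m \<eta> optimal_margin_nonneg[of m \<eta>] by simp
  have "w * (\<Sum>j<m. relu_gap (a j - \<eta> * (\<Sum>i<m. a i)) b)
      \<le> \<bar>w\<bar> * \<bar>\<Sum>j<m. relu_gap (a j - \<eta> * (\<Sum>i<m. a i)) b\<bar>"
    by (simp add: abs_mult[symmetric])
  also have "\<dots> \<le> \<bar>w\<bar> * (C * sqrt R)"
    unfolding C_def R_def using abs_relu_gap_sum_le[OF m \<eta>] by (intro mult_left_mono) auto
  also have "\<dots> = C * (\<bar>w\<bar> * sqrt R)" by simp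
  also have "\<dots> \<le> C * ((w\<^sup>2 + R) / 2)"
  proof (rule mult_left_mono[OF _ C])
    have "0 \<le> (\<bar>w\<bar> - sqrt R)\<^sup>2" by simp
    thus "\<bar>w\<bar> * sqrt R \<le> (w\<^sup>2 + R) / 2" using R by (simp add: power2_eq_square algebra_simps)
  qed
  also have "\<dots> \<le> C * (1 / 2)" using unit C unfolding R_def by (intro mult_left_mono) auto
  finally show ?thesis unfolding C_def by simp
qed

lemma borel_measurable_param_coord [measurable]:
  "i < N + 2 \<Longrightarrow> (\<lambda>\<theta>. \<theta> i) \<in> borel_measurable (param_space N)"
  unfolding param_space_def by simp

lemma borel_measurable_preact [measurable]: "(\<lambda>\<theta>. preact N \<theta> x) \<in> borel_measurable (param_space N)"
  unfolding preact_def by measurable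

lemma borel_measurable_relu [measurable]: "relu \<in> borel_measurable borel"
  unfolding relu_def by measurable

lemma borel_measurable_relu' [measurable]: "relu' \<in> borel_measurable borel"
  unfolding relu'_def by measurable

lemma sets_param_space_sphere [measurable]:
  "{\<theta> \<in> space (param_space N). (\<Sum>i<N + 2. (\<theta> i)\<^sup>2) = 1} \<in> sets (param_space N)"
  by measurable

definition neuron :: "nat \<Rightarrow> real \<Rightarrow> (nat \<Rightarrow> real) \<Rightarrow> real \<Rightarrow> nat \<Rightarrow> real" where
  "neuron N w r b = restrict (\<lambda>i. if i = 0 then w else if i = Suc N then b else r (i - 1)) {..<N + 2}"

lemma neuron_simps:
  "neuron N w r b 0 = w" "neuron N w r b (Suc N) = b" "n < N \<Longrightarrow> neuron N w r b (Suc n) = r n"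
  unfolding neuron_def by auto

lemma neuron_in_space: "neuron N w r b \<in> space (param_space N)"
  unfolding neuron_def param_space_def by (simp add: space_PiM)

lemma sum_param_split: "(\<Sum>i<N + 2. f i) = f 0 + (\<Sum>n<N. f (Suc n)) + f (Suc N)"
proof -
  have "(\<Sum>i<N + 2. f i) = (\<Sum>i<Suc N. f i) + f (Suc N)" by simp
  also have "(\<Sum>i<Suc N. f i) = f 0 + (\<Sum>n<N. f (Suc n))" by (rule sum.lessThan_Suc_shift)
  finally show ?thesis .
qed

lemma sum_power2_neuron:
  "(\<Sum>i<N + 2. (neuron N w r b i)\<^sup>2) = w\<^sup>2 + (\<Sum>n<N. (r n)\<^sup>2) + b\<^sup>2"
  unfolding sum_param_split by (simp add: neuron_simps)

lemma preact_neuron: "preact N (neuron N w r b) x = (\<Sum>n<N. r n * x n) + b"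
  unfolding preact_def by (simp add: neuron_simps)

definition antipodal_net :: "nat \<Rightarrow> real \<Rightarrow> (nat \<Rightarrow> real) \<Rightarrow> real \<Rightarrow> (nat \<Rightarrow> real) measure" where
  "antipodal_net N w r b = distr (measure_pmf (bernoulli_pmf (1/2))) (param_space N)
     (\<lambda>c. if c then neuron N w r b else neuron N (- w) (\<lambda>n. - r n) b)"

lemma measurable_antipodal_choice:
  "(\<lambda>c. if c then neuron N w r b else neuron N (- w) (\<lambda>n. - r n) b)
    \<in> measurable (measure_pmf (bernoulli_pmf (1/2))) (param_space N)"
  using neuron_in_space by auto

lemma integral_antipodal_net:
  fixes g :: "(nat \<Rightarrow> real) \<Rightarrow> real"
  assumes "g \<in> borel_measurable (param_space N)"
  shows "(\<integral>\<theta>. g \<theta> \<partial>antipodal_net N w r b) = (g (neuron N w r b) + g (neuron N (- w) (\<lambda>n. - r n) b)) / 2"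
  unfolding antipodal_net_def
  using integral_distr[OF measurable_antipodal_choice assms]
  by (simp add: integral_measure_pmf[where A=UNIV] UNIV_bool)

lemma antipodal_net_in_networks:
  assumes "w\<^sup>2 + (\<Sum>n<N. (r n)\<^sup>2) + b\<^sup>2 = 1"
  shows "antipodal_net N w r b \<in> networks N"
  unfolding networks_def
proof (intro CollectI conjI)
  show "sets (antipodal_net N w r b) = sets (param_space N)" unfolding antipodal_net_def by simp
  show "prob_space (antipodal_net N w r b)" unfolding antipodal_net_def
    by (rule prob_space.prob_space_distr[OF measure_pmf.prob_space_axioms measurable_antipodal_choice])
  have "(\<Sum>i<N + 2. (neuron N w r b i)\<^sup>2) = 1" "(\<Sum>i<N + 2. (neuron N (- w) (\<lambda>n. - r n) b i)\<^sup>2) = 1"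
    unfolding sum_power2_neuron using assms by simp_all
  hence "AE c in measure_pmf (bernoulli_pmf (1/2)).
      (\<Sum>i<N + 2. ((if c then neuron N w r b else neuron N (- w) (\<lambda>n. - r n) b) i)\<^sup>2) = 1"
    by (intro AE_I2) (metis (full_types))
  thus "AE \<theta> in antipodal_net N w r b. (\<Sum>i<N + 2. (\<theta> i)\<^sup>2) = 1"
    unfolding antipodal_net_def
    by (subst AE_distr_iff[OF measurable_antipodal_choice sets_param_space_sphere])
qed

lemma net_out_antipodal_net:
  "net_out N (antipodal_net N w r b) x = w / 2 * relu_gap (\<Sum>n<N. r n * x n) b"
proof -
  define T where "T = (\<Sum>n<N. r n * x n)"
  have "(\<Sum>n<N. - r n * x n) = - T" unfolding T_def by (simp add: sum_negf)
  then show ?thesis unfolding net_out_def relu_gap_def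
    by (simp add: integral_antipodal_net preact_neuron neuron_simps T_def[symmetric] field_simps)
qed

lemma grad_integral_antipodal_net:
  assumes "0 < b" "b \<le> \<bar>\<Sum>n<N. r n * x n\<bar>" "n < N"
  shows "(\<integral>\<theta>. \<theta> 0 * relu' (preact N \<theta> x) * \<theta> (Suc n) \<partial>antipodal_net N w r b) = w / 2 * r n"
proof -
  have "relu' ((\<Sum>n<N. r n * x n) + b) + relu' (b - (\<Sum>n<N. r n * x n)) = 1"
    using assms by (intro relu'_add_relu'_reflect)
  thus ?thesis using assms(3)
    by (simp add: integral_antipodal_net preact_neuron neuron_simps sum_negf algebra_simps
        flip: distrib_left)
qed

lemma abs_neuron_output_le:
  assumes unit: "(\<Sum>i<N + 2. (\<theta> i)\<^sup>2) = 1" and x: "\<forall>n<N. \<bar>x n\<bar> \<le> C"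
  shows "\<bar>\<theta> 0 * relu (preact N \<theta> x)\<bar> \<le> N * C + 1"
proof -
  have \<theta>: "\<bar>\<theta> i\<bar> \<le> 1" if "i < N + 2" for i
    using member_le_sum[of i "{..<N + 2}" "\<lambda>i. (\<theta> i)\<^sup>2"] unit that by (simp add: abs_square_le_1)
  have "\<bar>relu (preact N \<theta> x)\<bar> \<le> \<bar>preact N \<theta> x\<bar>" unfolding relu_def by auto
  also have "\<dots> \<le> (\<Sum>n<N. \<bar>\<theta> (Suc n)\<bar> * \<bar>x n\<bar>) + \<bar>\<theta> (Suc N)\<bar>"
    unfolding preact_def abs_mult[symmetric]
    by (rule order_trans[OF abs_triangle_ineq add_right_mono[OF sum_abs]])
  also have "\<dots> \<le> (\<Sum>n<N. 1 * C) + 1"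
    using \<theta> x by (intro add_mono sum_mono mult_mono) auto
  finally have "\<bar>relu (preact N \<theta> x)\<bar> \<le> N * C + 1" by simp
  moreover have "\<bar>\<theta> 0\<bar> \<le> 1" using \<theta> by simp
  ultimately have "\<bar>\<theta> 0\<bar> * \<bar>relu (preact N \<theta> x)\<bar> \<le> 1 * (N * C + 1)" by (intro mult_mono) auto
  thus ?thesis by (simp add: abs_mult)
qed

lemma net_out_bounded:
  assumes \<mu>: "\<mu> \<in> networks N" and x: "\<forall>n<N. \<bar>x n\<bar> \<le> C"
  shows "integrable \<mu> (\<lambda>\<theta>. \<theta> 0 * relu (preact N \<theta> x))" "\<bar>net_out N \<mu> x\<bar> \<le> N * C + 1"
proof -
  interpret prob_space \<mu> using \<mu> unfolding networks_def by simp
  have "(\<lambda>\<theta>. \<theta> 0 * relu (preact N \<theta> x)) \<in> borel_measurable \<mu>"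
    using \<mu> unfolding networks_def by (simp cong: measurable_cong_sets)
  moreover have bound: "AE \<theta> in \<mu>. \<bar>\<theta> 0 * relu (preact N \<theta> x)\<bar> \<le> N * C + 1"
    using \<mu> x abs_neuron_output_le unfolding networks_def by auto
  ultimately show int: "integrable \<mu> (\<lambda>\<theta>. \<theta> 0 * relu (preact N \<theta> x))"
    by (intro integrable_const_bound[where B = "N * C + 1"]) auto
  have "\<bar>net_out N \<mu> x\<bar> \<le> (\<integral>\<theta>. \<bar>\<theta> 0 * relu (preact N \<theta> x)\<bar> \<partial>\<mu>)"
    unfolding net_out_def by (rule integral_abs_bound)
  also have "\<dots> \<le> (\<integral>\<theta>. N * C + 1 \<partial>\<mu>)"
    using bound int by (intro integral_mono_AE) auto
  finally show "\<bar>net_out N \<mu> x\<bar> \<le> N * C + 1" by (simp add: prob_space)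
qed

lemma sum_blocks:
  fixes f :: "nat \<Rightarrow> 'a::comm_monoid_add"
  shows "(\<Sum>n<m * dt. f n) = (\<Sum>i<m. \<Sum>k<dt. f (i * dt + k))"
proof -
  have "sum f {i * dt..<i * dt + dt} = (\<Sum>k<dt. f (i * dt + k))" for i
    using sum.shift_bounds_nat_ivl[of f 0 "i * dt" dt] by (simp add: atLeast0LessThan add.commute)
  then show ?thesis using sum.nat_group[of f dt m] by simp
qed

lemma block_index_less: "i < m \<Longrightarrow> k < dt \<Longrightarrow> i * dt + k < m * dt" for i m k dt :: nat
proof -
  assume "i < m" "k < dt"
  hence "i * dt + k < Suc i * dt" by simp
  also have "\<dots> \<le> m * dt" using \<open>i < m\<close> by (intro mult_right_mono) auto
  finally show ?thesis .
qed

definition signal :: "nat \<Rightarrow> nat \<Rightarrow> (nat \<Rightarrow> real) \<Rightarrow> nat \<Rightarrow> real" where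
  "signal dt m u n = (if n < m * dt then u (n mod dt) else 0)"

lemma sum_signal_mult:
  assumes "m * dt \<le> N"
  shows "(\<Sum>n<N. signal dt m u n * f n) = (\<Sum>i<m. \<Sum>k<dt. u k * f (i * dt + k))"
proof -
  have "(\<Sum>n<N. signal dt m u n * f n) = (\<Sum>n<m * dt. signal dt m u n * f n)"
    using assms by (intro sum.mono_neutral_right) (auto simp: signal_def)
  also have "\<dots> = (\<Sum>i<m. \<Sum>k<dt. u k * f (i * dt + k))"
    unfolding sum_blocks by (intro sum.cong refl) (simp add: signal_def block_index_less)
  finally show ?thesis .
qed

lemma sum_power2_signal:
  assumes "m * dt \<le> N"
  shows "(\<Sum>n<N. (signal dt m u n)\<^sup>2) = m * (\<Sum>k<dt. (u k)\<^sup>2)"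
  using sum_signal_mult[OF assms, of u "signal dt m u"]
  by (simp add: power2_eq_square signal_def block_index_less)

lemma abs_sum_mult_le_sqrt:
  fixes f g :: "'a \<Rightarrow> real"
  shows "\<bar>\<Sum>k\<in>A. f k * g k\<bar> \<le> sqrt (\<Sum>k\<in>A. (f k)\<^sup>2) * sqrt (\<Sum>k\<in>A. (g k)\<^sup>2)"
proof -
  have "\<bar>\<Sum>k\<in>A. f k * g k\<bar> = sqrt ((\<Sum>k\<in>A. f k * g k)\<^sup>2)" by simp
  also have "\<dots> \<le> sqrt ((\<Sum>k\<in>A. (f k)\<^sup>2) * (\<Sum>k\<in>A. (g k)\<^sup>2))"
    by (intro real_sqrt_le_mono Cauchy_Schwarz_ineq_sum)
  finally show ?thesis by (simp add: real_sqrt_mult)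
qed

lemma data_support_label: "(x, y) \<in> data_support d dt u \<eta> \<Longrightarrow> y = 1 \<or> y = -1"
  unfolding data_support_def by simp

lemma data_support_signal_correlation:
  assumes d: "d = 2 * m" and u: "sqrt (\<Sum>k<dt. (u k)\<^sup>2) = 1" and \<eta>: "0 \<le> \<eta>"
    and xy: "(x, y) \<in> data_support d dt u \<eta>"
  shows "1 - m * \<eta> \<le> y * (\<Sum>n<dt * d. signal dt m u n * x n)"
proof -
  from xy obtain j g where y: "y = 1 \<or> y = -1" and j: "j \<in> {1..m}"
    and g: "\<forall>i\<in>{1..d}. sqrt (\<Sum>k<dt. (g i k)\<^sup>2) \<le> 1"
    and x: "\<forall>i\<in>{1..d}. \<forall>k<dt. x ((i - 1) * dt + k) = (if i = j then y * u k else 0) + \<eta> * g i k"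
    unfolding data_support_def d by auto
  define c where "c i = (\<Sum>k<dt. u k * g (Suc i) k)" for i
  have c: "\<bar>c i\<bar> \<le> 1" if "i < m" for i
    using abs_sum_mult_le_sqrt[of u "g (Suc i)" "{..<dt}"] g u that d unfolding c_def
    by (auto intro: order_trans)
  have "(\<Sum>n<dt * d. signal dt m u n * x n) = (\<Sum>i<m. \<Sum>k<dt. u k * x (i * dt + k))"
    using d by (intro sum_signal_mult) simp
  also have "\<dots> = (\<Sum>i<m. (if Suc i = j then y else 0) + \<eta> * c i)"
  proof (intro sum.cong refl)
    fix i assume "i \<in> {..<m}"
    hence "(\<Sum>k<dt. u k * x (i * dt + k))
        = (\<Sum>k<dt. (if Suc i = j then y * (u k)\<^sup>2 else 0) + \<eta> * (u k * g (Suc i) k))"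
    proof (intro sum.cong refl)
      fix k assume "k \<in> {..<dt}"
      thus "u k * x (i * dt + k) = (if Suc i = j then y * (u k)\<^sup>2 else 0) + \<eta> * (u k * g (Suc i) k)"
        using x[rule_format, of "Suc i" k] \<open>i \<in> {..<m}\<close> d by (simp add: power2_eq_square algebra_simps)
    qed
    also have "\<dots> = (if Suc i = j then y * (\<Sum>k<dt. (u k)\<^sup>2) else 0) + \<eta> * c i"
      unfolding c_def by (cases "Suc i = j") (simp_all add: sum.distrib sum_distrib_left)
    finally show "(\<Sum>k<dt. u k * x (i * dt + k)) = (if Suc i = j then y else 0) + \<eta> * c i"
      using u by simp
  qed
  also have "\<dots> = y + \<eta> * (\<Sum>i<m. c i)"
  proof -
    have "(\<Sum>i<m. if Suc i = j then y else 0) = (\<Sum>i<m. if i = j - 1 then y else 0)"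
      using j by (intro sum.cong) auto
    also have "\<dots> = y" using j by auto
    finally have "(\<Sum>i<m. if Suc i = j then y else 0) = y" .
    then show ?thesis by (simp add: sum.distrib sum_distrib_left)
  qed
  finally have "y * (\<Sum>n<dt * d. signal dt m u n * x n) = 1 + y * \<eta> * (\<Sum>i<m. c i)"
    using y by (auto simp: algebra_simps)
  moreover have "\<bar>y * \<eta> * (\<Sum>i<m. c i)\<bar> \<le> 1 * \<eta> * m"
    using y \<eta> c order_trans[OF sum_abs sum_bounded_above[of "{..<m}" "\<lambda>i. \<bar>c i\<bar>" 1]]
    by (auto simp: abs_mult intro!: mult_mono)
  ultimately show ?thesis by (simp add: abs_le_iff algebra_simps)
qed

lemma data_support_abs_le:
  assumes u: "sqrt (\<Sum>k<dt. (u k)\<^sup>2) = 1" and \<eta>: "0 \<le> \<eta>" "\<eta> \<le> 1"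
    and xy: "(x, y) \<in> data_support d dt u \<eta>" and n: "n < dt * d"
  shows "\<bar>x n\<bar> \<le> 2"
proof -
  from xy obtain j g where y: "y = 1 \<or> y = -1"
    and g: "\<forall>i\<in>{1..d}. sqrt (\<Sum>k<dt. (g i k)\<^sup>2) \<le> 1"
    and x: "\<forall>i\<in>{1..d}. \<forall>k<dt. x ((i - 1) * dt + k) = (if i = j then y * u k else 0) + \<eta> * g i k"
    unfolding data_support_def by blast
  have dt: "0 < dt" using n by (cases dt) auto
  define i where "i = Suc (n div dt)"
  define k where "k = n mod dt"
  have k: "k < dt" unfolding k_def using dt by simp
  have "n div dt < d" using n dt by (simp add: div_less_iff_less_mult mult.commute)
  hence i: "i \<in> {1..d}" unfolding i_def by auto
  have "(i - 1) * dt + k = n" unfolding i_def k_def by simp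
  hence xn: "x n = (if i = j then y * u k else 0) + \<eta> * g i k"
    using x[rule_format, OF i k] by simp
  have "(u k)\<^sup>2 \<le> 1"
    using member_le_sum[of k "{..<dt}" "\<lambda>k. (u k)\<^sup>2"] u k by simp
  hence u1: "\<bar>u k\<bar> \<le> 1" by (simp add: abs_square_le_1)
  have "(g i k)\<^sup>2 \<le> (\<Sum>k<dt. (g i k)\<^sup>2)"
    using k by (intro member_le_sum) auto
  also have "\<dots> \<le> 1" using g i by simp
  finally have "\<bar>\<eta> * g i k\<bar> \<le> 1"
    using \<eta> by (simp add: abs_square_le_1 abs_mult mult_le_one)
  moreover have "\<bar>if i = j then y * u k else 0\<bar> \<le> 1" using y u1 by (auto simp: abs_mult)
  ultimately show ?thesis unfolding xn using abs_triangle_ineq[of "if i = j then y * u k else 0" "\<eta> * g i k"]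
    by linarith
qed

definition probe :: "nat \<Rightarrow> nat \<Rightarrow> (nat \<Rightarrow> real) \<Rightarrow> real \<Rightarrow> nat \<Rightarrow> real \<Rightarrow> nat \<Rightarrow> real" where
  "probe dt m u \<eta> j y n = y * ((if n div dt = j then 1 else 0) - \<eta>) * signal dt m u n"

definition block_coeff :: "nat \<Rightarrow> (nat \<Rightarrow> real) \<Rightarrow> (nat \<Rightarrow> real) \<Rightarrow> nat \<Rightarrow> real" where
  "block_coeff dt u \<theta> i = (\<Sum>k<dt. \<theta> (Suc (i * dt + k)) * u k)"

lemma probe_in_data_support:
  assumes d: "d = 2 * m" and u: "sqrt (\<Sum>k<dt. (u k)\<^sup>2) = 1" and j: "j < m" and y: "y = 1 \<or> y = -1"
  shows "(probe dt m u \<eta> j y, y) \<in> data_support d dt u \<eta>"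
proof -
  define g where "g i k = (if i \<le> m then - y * u k else 0)" for i k
  have "sqrt (\<Sum>k<dt. (g i k)\<^sup>2) \<le> 1" for i
  proof (cases "i \<le> m")
    case True
    hence "(\<Sum>k<dt. (g i k)\<^sup>2) = (\<Sum>k<dt. (u k)\<^sup>2)"
      using y by (intro sum.cong) (auto simp: g_def power2_eq_square)
    thus ?thesis using u by simp
  qed (simp add: g_def)
  moreover have "probe dt m u \<eta> j y ((i - 1) * dt + k) = (if i = Suc j then y * u k else 0) + \<eta> * g i k"
    if i: "i \<in> {1..d}" and k: "k < dt" for i k
  proof -
    have "((i - 1) * dt + k < m * dt) = (i \<le> m)"
    proof
      assume "(i - 1) * dt + k < m * dt"
      hence "(i - 1) * dt < m * dt" by linarith
      thus "i \<le> m" using i by (auto simp: mult_less_cancel2)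
    qed (use i k block_index_less[of "i - 1" m k dt] in auto)
    moreover have "((i - 1) * dt + k) div dt = i - 1" "((i - 1) * dt + k) mod dt = k" using k by auto
    ultimately show ?thesis using i j k unfolding probe_def signal_def g_def
      by (auto simp: algebra_simps)
  qed
  moreover have "probe dt m u \<eta> j y n = 0" if "dt * d \<le> n" for n
  proof -
    have "m * dt \<le> d * dt" using d by (intro mult_right_mono) auto
    moreover have "d * dt = dt * d" by (rule mult.commute)
    ultimately have "\<not> n < m * dt" using that by linarith
    thus ?thesis unfolding probe_def signal_def by simp
  qed
  moreover have "Suc j \<in> {1..d div 2}" using j d by auto
  ultimately show ?thesis unfolding data_support_def using y by blast
qed

lemma preact_probe:
  assumes d: "d = 2 * m" and j: "j < m"
  shows "preact (dt * d) \<theta> (probe dt m u \<eta> j y)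
    = y * (block_coeff dt u \<theta> j - \<eta> * (\<Sum>i<m. block_coeff dt u \<theta> i)) + \<theta> (Suc (dt * d))"
proof -
  have "(\<Sum>n<dt * d. \<theta> (Suc n) * probe dt m u \<eta> j y n)
      = (\<Sum>n<dt * d. signal dt m u n * (y * ((if n div dt = j then 1 else 0) - \<eta>) * \<theta> (Suc n)))"
    unfolding probe_def by (simp add: mult_ac)
  also have "\<dots> = (\<Sum>i<m. y * ((if i = j then 1 else 0) - \<eta>) * block_coeff dt u \<theta> i)"
    using d unfolding block_coeff_def
    by (subst sum_signal_mult) (auto intro!: sum.cong simp: sum_distrib_left mult_ac)
  also have "\<dots> = y * (block_coeff dt u \<theta> j - \<eta> * (\<Sum>i<m. block_coeff dt u \<theta> i))"
  proof -
    have "(\<Sum>i<m. y * ((if i = j then 1 else 0) - \<eta>) * block_coeff dt u \<theta> i)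
        = (\<Sum>i<m. (if i = j then y * block_coeff dt u \<theta> i else 0) - y * \<eta> * block_coeff dt u \<theta> i)"
      by (intro sum.cong refl) (simp add: algebra_simps)
    thus ?thesis using j by (simp add: sum_subtractf sum_distrib_left algebra_simps)
  qed
  finally show ?thesis unfolding preact_def by simp
qed

lemma sum_power2_block_coeff_le:
  assumes "m * dt \<le> N" and u: "sqrt (\<Sum>k<dt. (u k)\<^sup>2) = 1"
  shows "(\<Sum>i<m. (block_coeff dt u \<theta> i)\<^sup>2) \<le> (\<Sum>n<N. (\<theta> (Suc n))\<^sup>2)"
proof -
  have "(\<Sum>i<m. (block_coeff dt u \<theta> i)\<^sup>2) \<le> (\<Sum>i<m. \<Sum>k<dt. (\<theta> (Suc (i * dt + k)))\<^sup>2)"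
  proof (rule sum_mono)
    fix i
    show "(block_coeff dt u \<theta> i)\<^sup>2 \<le> (\<Sum>k<dt. (\<theta> (Suc (i * dt + k)))\<^sup>2)"
      using Cauchy_Schwarz_ineq_sum[of "\<lambda>k. \<theta> (Suc (i * dt + k))" u "{..<dt}"] u
      unfolding block_coeff_def by simp
  qed
  also have "\<dots> = (\<Sum>n<m * dt. (\<theta> (Suc n))\<^sup>2)" by (rule sum_blocks[symmetric])
  also have "\<dots> \<le> (\<Sum>n<N. (\<theta> (Suc n))\<^sup>2)" using assms by (intro sum_mono2) auto
  finally show ?thesis .
qed

lemma margin_le_support_point:
  assumes \<mu>: "\<mu> \<in> networks (dt * d)" and u: "sqrt (\<Sum>k<dt. (u k)\<^sup>2) = 1" and \<eta>: "0 \<le> \<eta>" "\<eta> \<le> 1"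
    and xy: "(x, y) \<in> data_support d dt u \<eta>"
  shows "margin d dt u \<eta> \<mu> \<le> y * net_out (dt * d) \<mu> x"
proof -
  have "- (real (dt * d) * 2 + 1) \<le> y' * net_out (dt * d) \<mu> x'"
    if "(x', y') \<in> data_support d dt u \<eta>" for x' y'
  proof -
    have "\<bar>net_out (dt * d) \<mu> x'\<bar> \<le> real (dt * d) * 2 + 1"
      using net_out_bounded(2)[OF \<mu>] data_support_abs_le[OF u \<eta> that] by blast
    thus ?thesis using data_support_label[OF that] by auto
  qed
  hence "bdd_below ((\<lambda>p. snd p * net_out (dt * d) \<mu> (fst p)) ` data_support d dt u \<eta>)"
    by (intro bdd_belowI2) auto
  thus ?thesis unfolding margin_def using xy by (auto intro: cINF_lower2)
qed

lemma neuron_probe_response_le: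
  fixes d dt m :: nat and \<eta> :: real
  assumes d: "d = 2 * m" and m: "1 \<le> m" and u: "sqrt (\<Sum>k<dt. (u k)\<^sup>2) = 1"
    and \<eta>: "0 \<le> \<eta>" "20 * m * \<eta> < 1" and \<theta>: "(\<Sum>i<dt * d + 2. (\<theta> i)\<^sup>2) = 1"
  shows "(\<Sum>j<m. \<theta> 0 * relu (preact (dt * d) \<theta> (probe dt m u \<eta> j 1))
      - \<theta> 0 * relu (preact (dt * d) \<theta> (probe dt m u \<eta> j (-1)))) \<le> 2 * m * optimal_margin m \<eta>"
proof -
  define a where "a = block_coeff dt u \<theta>"
  define b where "b = \<theta> (Suc (dt * d))"
  have "(\<Sum>j<m. \<theta> 0 * relu (preact (dt * d) \<theta> (probe dt m u \<eta> j 1))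
      - \<theta> 0 * relu (preact (dt * d) \<theta> (probe dt m u \<eta> j (-1))))
      = (\<Sum>j<m. \<theta> 0 * relu_gap (a j - \<eta> * (\<Sum>i<m. a i)) b)"
  proof (intro sum.cong refl)
    fix j assume "j \<in> {..<m}"
    thus "\<theta> 0 * relu (preact (dt * d) \<theta> (probe dt m u \<eta> j 1))
        - \<theta> 0 * relu (preact (dt * d) \<theta> (probe dt m u \<eta> j (-1)))
        = \<theta> 0 * relu_gap (a j - \<eta> * (\<Sum>i<m. a i)) b"
      by (simp add: preact_probe d a_def b_def relu_gap_def right_diff_distrib algebra_simps)
  qed
  also have "\<dots> = \<theta> 0 * (\<Sum>j<m. relu_gap (a j - \<eta> * (\<Sum>i<m. a i)) b)"
    by (rule sum_distrib_left[symmetric])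
  also have "\<dots> \<le> 2 * m * optimal_margin m \<eta>"
  proof (rule neuron_relu_gap_sum_le[OF m \<eta>])
    have "(\<Sum>i<m. (a i)\<^sup>2) \<le> (\<Sum>n<dt * d. (\<theta> (Suc n))\<^sup>2)"
      unfolding a_def using d u by (intro sum_power2_block_coeff_le) auto
    thus "(\<theta> 0)\<^sup>2 + (\<Sum>j<m. (a j)\<^sup>2) + b\<^sup>2 \<le> 1"
      using \<theta> unfolding sum_param_split b_def by linarith
  qed
  finally show ?thesis .
qed

lemma margin_le_optimal_margin:
  fixes d dt m :: nat and \<eta> :: real
  assumes d: "d = 2 * m" and m: "1 \<le> m" and u: "sqrt (\<Sum>k<dt. (u k)\<^sup>2) = 1"
    and \<eta>: "0 \<le> \<eta>" "20 * m * \<eta> < 1" and \<mu>: "\<mu> \<in> networks (dt * d)"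
  shows "margin d dt u \<eta> \<mu> \<le> optimal_margin m \<eta>"
proof -
  interpret prob_space \<mu> using \<mu> unfolding networks_def by simp
  define N where "N = dt * d"
  define g where "g j y \<theta> = \<theta> 0 * relu (preact N \<theta> (probe dt m u \<eta> j y))" for j y \<theta>
  have \<eta>1: "\<eta> \<le> 1" using m \<eta> mult_right_mono[of 1 "real m" \<eta>] by simp
  have probe: "(probe dt m u \<eta> j y, y) \<in> data_support d dt u \<eta>" if "j < m" "y = 1 \<or> y = -1" for j y
    using probe_in_data_support[OF d u that] .
  have int: "integrable \<mu> (g j y)" if "j < m" "y = 1 \<or> y = -1" for j y
    using net_out_bounded(1)[OF \<mu>] data_support_abs_le[OF u \<eta>(1) \<eta>1 probe[OF that]]
    unfolding g_def N_def by blast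
  have "2 * m * margin d dt u \<eta> \<mu> = (\<Sum>j<m. margin d dt u \<eta> \<mu> + margin d dt u \<eta> \<mu>)" by simp
  also have "\<dots> \<le> (\<Sum>j<m. net_out N \<mu> (probe dt m u \<eta> j 1) - net_out N \<mu> (probe dt m u \<eta> j (-1)))"
  proof (rule sum_mono)
    fix j assume "j \<in> {..<m}"
    hence "margin d dt u \<eta> \<mu> \<le> 1 * net_out N \<mu> (probe dt m u \<eta> j 1)"
      "margin d dt u \<eta> \<mu> \<le> -1 * net_out N \<mu> (probe dt m u \<eta> j (-1))"
      using margin_le_support_point[OF \<mu> u \<eta>(1) \<eta>1 probe[of j 1]]
        margin_le_support_point[OF \<mu> u \<eta>(1) \<eta>1 probe[of j "-1"]]
      unfolding N_def by auto
    thus "margin d dt u \<eta> \<mu> + margin d dt u \<eta> \<mu>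
        \<le> net_out N \<mu> (probe dt m u \<eta> j 1) - net_out N \<mu> (probe dt m u \<eta> j (-1))" by simp
  qed
  also have "\<dots> = (\<Sum>j<m. (\<integral>\<theta>. g j 1 \<theta> - g j (-1) \<theta> \<partial>\<mu>))"
    using int unfolding net_out_def g_def
    by (intro sum.cong refl Bochner_Integration.integral_diff[symmetric]) auto
  also have "\<dots> = (\<integral>\<theta>. (\<Sum>j<m. g j 1 \<theta> - g j (-1) \<theta>) \<partial>\<mu>)"
    using int by (intro Bochner_Integration.integral_sum[symmetric]) auto
  also have "\<dots> \<le> (\<integral>\<theta>. 2 * m * optimal_margin m \<eta> \<partial>\<mu>)"
  proof (rule integral_mono_AE)
    show "integrable \<mu> (\<lambda>\<theta>. \<Sum>j<m. g j 1 \<theta> - g j (-1) \<theta>)" using int by auto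
    have "AE \<theta> in \<mu>. (\<Sum>i<N + 2. (\<theta> i)\<^sup>2) = 1" using \<mu> unfolding networks_def N_def by simp
    thus "AE \<theta> in \<mu>. (\<Sum>j<m. g j 1 \<theta> - g j (-1) \<theta>) \<le> 2 * m * optimal_margin m \<eta>"
      by eventually_elim (use neuron_probe_response_le[OF d m u \<eta>] in \<open>simp add: g_def N_def\<close>)
  qed simp
  finally show ?thesis using m by (simp add: prob_space)
qed

lemma margin_antipodal_signal_net:
  fixes d dt m :: nat and \<eta> w \<alpha> \<tau> :: real
  assumes d: "d = 2 * m" and m: "1 \<le> m" and u: "sqrt (\<Sum>k<dt. (u k)\<^sup>2) = 1" and \<eta>: "0 \<le> \<eta>"
    and w: "0 < w" and \<alpha>: "0 < \<alpha>" and \<tau>: "0 < \<tau>" "\<tau> \<le> 1 - m * \<eta>"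
  shows "w * \<alpha> * \<tau> \<le> margin d dt u \<eta> (antipodal_net (dt * d) w (\<lambda>n. \<alpha> * signal dt m u n) (\<alpha> * \<tau>))"
  unfolding margin_def
proof (rule cINF_greatest)
  show "data_support d dt u \<eta> \<noteq> {}" using probe_in_data_support[OF d u, of 0 1] m by auto
  fix p assume "p \<in> data_support d dt u \<eta>"
  then obtain x y where xy: "(x, y) \<in> data_support d dt u \<eta>" and p: "p = (x, y)" by (cases p) auto
  define T where "T = (\<Sum>n<dt * d. signal dt m u n * x n)"
  have y: "y = 1 \<or> y = -1" using data_support_label[OF xy] .
  have "\<tau> \<le> y * T" unfolding T_def using data_support_signal_correlation[OF d u \<eta> xy] \<tau> by linarith
  hence "\<alpha> * \<tau> \<le> \<alpha> * (y * T)" using \<alpha> by simp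
  have "y * net_out (dt * d) (antipodal_net (dt * d) w (\<lambda>n. \<alpha> * signal dt m u n) (\<alpha> * \<tau>)) x
      = w / 2 * relu_gap (\<alpha> * (y * T)) (\<alpha> * \<tau>)"
    unfolding net_out_antipodal_net T_def using sign_mult_relu_gap[OF y]
    by (simp add: sum_distrib_left mult_ac)
  also have "\<dots> = w / 2 * (\<alpha> * (y * T) + \<alpha> * \<tau>)"
    using \<open>\<alpha> * \<tau> \<le> \<alpha> * (y * T)\<close> \<alpha> \<tau> by (simp add: relu_gap_eq_add)
  also have "\<dots> \<ge> w / 2 * (\<alpha> * \<tau> + \<alpha> * \<tau>)"
    using \<open>\<alpha> * \<tau> \<le> \<alpha> * (y * T)\<close> w by (intro mult_left_mono) auto
  finally show "w * \<alpha> * \<tau> \<le> snd p * net_out (dt * d) (antipodal_net (dt * d) w (\<lambda>n. \<alpha> * signal dt m u n) (\<alpha> * \<tau>)) (fst p)"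
    using p by simp
qed

lemma loss_grad_antipodal_signal_net:
  fixes d dt m :: nat and \<eta> w \<alpha> \<tau> :: real
  assumes d: "d = 2 * m" and u: "sqrt (\<Sum>k<dt. (u k)\<^sup>2) = 1" and \<eta>: "0 \<le> \<eta>"
    and w: "w \<noteq> 0" and \<alpha>: "0 < \<alpha>" and \<tau>: "0 < \<tau>" "\<tau> \<le> 1 - m * \<eta>"
    and xy: "(x, y) \<in> data_support d dt u \<eta>"
  shows "\<exists>C. C \<noteq> 0 \<and> (\<forall>n<dt * d.
    loss_grad (dt * d) (antipodal_net (dt * d) w (\<lambda>n. \<alpha> * signal dt m u n) (\<alpha> * \<tau>)) x y n = C * signal dt m u n)"
proof -
  define \<nu> where "\<nu> = antipodal_net (dt * d) w (\<lambda>n. \<alpha> * signal dt m u n) (\<alpha> * \<tau>)"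
  define f where "f = net_out (dt * d) \<nu> x"
  define T where "T = (\<Sum>n<dt * d. signal dt m u n * x n)"
  have y: "y = 1 \<or> y = -1" using data_support_label[OF xy] .
  have "\<tau> \<le> y * T" unfolding T_def using data_support_signal_correlation[OF d u \<eta> xy] \<tau> by linarith
  hence "\<tau> \<le> \<bar>T\<bar>" using y by auto
  hence "\<alpha> * \<tau> \<le> \<bar>\<Sum>n<dt * d. \<alpha> * signal dt m u n * x n\<bar>"
    using \<alpha> unfolding T_def by (simp add: sum_distrib_left[symmetric] mult.assoc abs_mult)
  hence "loss_grad (dt * d) \<nu> x y n
      = (- y * (exp (- y * f) / (1 + exp (- y * f))) * w * \<alpha> / 2) * signal dt m u n" if "n < dt * d" for n
    using that \<alpha> \<tau> unfolding loss_grad_def f_def \<nu>_def by (simp add: grad_integral_antipodal_net)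
  moreover have "- y * (exp (- y * f) / (1 + exp (- y * f))) * w * \<alpha> / 2 \<noteq> 0"
  proof -
    have "0 < exp (- y * f) / (1 + exp (- y * f))" by (simp add: add_pos_pos)
    thus ?thesis using y w \<alpha> by (simp only: mult_eq_0_iff divide_eq_0_iff) auto
  qed
  ultimately show ?thesis unfolding \<nu>_def by blast
qed

lemma block_norm_signal_mult:
  assumes d: "d = 2 * m" and u: "sqrt (\<Sum>k<dt. (u k)\<^sup>2) = 1"
    and v: "\<forall>n<dt * d. v n = C * signal dt m u n"
  shows "j \<in> {1..m} \<Longrightarrow> block_norm dt v j = \<bar>C\<bar>"
    and "j \<in> {m + 1..d} \<Longrightarrow> block_norm dt v j = 0"
proof -
  have vj: "v ((j - 1) * dt + k) = C * signal dt m u ((j - 1) * dt + k)" if "j \<in> {1..d}" "k < dt" for j k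
  proof -
    have "(j - 1) * dt + k < Suc (j - 1) * dt" using that by (cases j) auto
    also have "\<dots> \<le> d * dt" using that by (intro mult_right_mono) auto
    finally show ?thesis using v by (simp add: mult.commute)
  qed
  show "block_norm dt v j = \<bar>C\<bar>" if j: "j \<in> {1..m}"
  proof -
    have "(\<Sum>k<dt. (v ((j - 1) * dt + k))\<^sup>2) = (\<Sum>k<dt. C\<^sup>2 * (u k)\<^sup>2)"
      using j d vj block_index_less[of "j - 1" m _ dt]
      by (intro sum.cong refl) (auto simp: signal_def power_mult_distrib)
    thus ?thesis using u unfolding block_norm_def by (simp add: sum_distrib_left[symmetric])
  qed
  show "block_norm dt v j = 0" if j: "j \<in> {m + 1..d}"
  proof -
    have "m * dt \<le> (j - 1) * dt" using j by (intro mult_right_mono) auto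
    hence "\<not> (j - 1) * dt + k < m * dt" for k by linarith
    hence "(\<Sum>k<dt. (v ((j - 1) * dt + k))\<^sup>2) = 0"
      using j d vj by (intro sum.neutral) (auto simp: signal_def)
    thus ?thesis unfolding block_norm_def by simp
  qed
qed

lemma antipodal_weights_normalized:
  fixes M \<tau> :: real
  assumes "0 < M"
  shows "(1 / sqrt 2)\<^sup>2 + (1 / sqrt (2 * (M + \<tau>\<^sup>2)))\<^sup>2 * M + (1 / sqrt (2 * (M + \<tau>\<^sup>2)) * \<tau>)\<^sup>2 = 1"
    and "1 / sqrt 2 * (1 / sqrt (2 * (M + \<tau>\<^sup>2))) * \<tau> = \<tau> / (2 * sqrt (M + \<tau>\<^sup>2))"
proof -
  have pos: "0 < M + \<tau>\<^sup>2" using assms by (simp add: add_pos_nonneg)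
  have "(1 / sqrt (2 * (M + \<tau>\<^sup>2)))\<^sup>2 * M + (1 / sqrt (2 * (M + \<tau>\<^sup>2)) * \<tau>)\<^sup>2
      = (M + \<tau>\<^sup>2) / (2 * (M + \<tau>\<^sup>2))"
    using pos by (simp add: power_divide power_mult_distrib add_divide_distrib)
  also have "\<dots> = 1 / 2" using pos by simp
  moreover have "(1 / sqrt 2)\<^sup>2 = 1 / (2 :: real)" by (simp add: power_divide)
  ultimately show "(1 / sqrt 2)\<^sup>2 + (1 / sqrt (2 * (M + \<tau>\<^sup>2)))\<^sup>2 * M + (1 / sqrt (2 * (M + \<tau>\<^sup>2)) * \<tau>)\<^sup>2 = 1"
    by linarith
  have "sqrt 2 * sqrt (2 * (M + \<tau>\<^sup>2)) = (sqrt 2 * sqrt 2) * sqrt (M + \<tau>\<^sup>2)"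
    by (simp only: real_sqrt_mult mult.assoc)
  hence "sqrt 2 * sqrt (2 * (M + \<tau>\<^sup>2)) = 2 * sqrt (M + \<tau>\<^sup>2)" by simp
  thus "1 / sqrt 2 * (1 / sqrt (2 * (M + \<tau>\<^sup>2))) * \<tau> = \<tau> / (2 * sqrt (M + \<tau>\<^sup>2))" by simp
qed

lemma antipodal_signal_net_max_margin:
  fixes d dt m :: nat and \<eta> \<tau> \<alpha> :: real
  assumes d: "d = 2 * m" and m: "1 \<le> m" and u: "sqrt (\<Sum>k<dt. (u k)\<^sup>2) = 1"
    and \<eta>: "0 \<le> \<eta>" "20 * m * \<eta> < 1"
  defines "\<tau> \<equiv> 1 - m * \<eta>" and "\<alpha> \<equiv> 1 / sqrt (2 * (m + \<tau>\<^sup>2))"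
  shows "max_margin d dt u \<eta> (antipodal_net (dt * d) (1 / sqrt 2) (\<lambda>n. \<alpha> * signal dt m u n) (\<alpha> * \<tau>))"
proof -
  define \<nu> where "\<nu> = antipodal_net (dt * d) (1 / sqrt 2) (\<lambda>n. \<alpha> * signal dt m u n) (\<alpha> * \<tau>)"
  have \<tau>: "0 < \<tau>" "\<tau> \<le> 1 - m * \<eta>" and \<alpha>: "0 < \<alpha>"
    using m \<eta> unfolding \<tau>_def \<alpha>_def by (auto simp: add_pos_nonneg)
  have "m * dt \<le> dt * d" unfolding d by simp
  hence "(\<Sum>n<dt * d. (\<alpha> * signal dt m u n)\<^sup>2) = \<alpha>\<^sup>2 * m"
    using u by (simp add: power_mult_distrib sum_distrib_left[symmetric] sum_power2_signal)
  hence "\<nu> \<in> networks (dt * d)"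
    unfolding \<nu>_def using antipodal_weights_normalized(1)[of m \<tau>, folded \<alpha>_def] m
    by (intro antipodal_net_in_networks) simp
  moreover have "optimal_margin m \<eta> \<le> margin d dt u \<eta> \<nu>"
    using margin_antipodal_signal_net[OF d m u \<eta>(1) _ \<alpha> \<tau>, of "1 / sqrt 2"]
      antipodal_weights_normalized(2)[of m \<tau>, folded \<alpha>_def] m
    unfolding \<nu>_def optimal_margin_def \<tau>_def[symmetric] by simp
  hence "margin d dt u \<eta> \<mu> \<le> margin d dt u \<eta> \<nu>" if "\<mu> \<in> networks (dt * d)" for \<mu>
    using margin_le_optimal_margin[OF d m u \<eta> that] by linarith
  ultimately show ?thesis unfolding max_margin_def \<nu>_def by blast
qed

theorem theorem1:
  fixes d dt :: nat and u :: "nat \<Rightarrow> real" and \<eta> :: real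
  assumes "even d" and "d \<ge> 2" and "dt \<ge> 1"
    and "sqrt (\<Sum>k<dt. (u k)\<^sup>2) = 1"
    and "0 \<le> \<eta>" and "\<eta> < 1 / (10 * real d)"
  shows "\<exists>\<nu>. max_margin d dt u \<eta> \<nu> \<and>
    (\<forall>(x, y)\<in>data_support d dt u \<eta>. \<exists>c > 0.
       (\<forall>j\<in>{1..d div 2}. block_norm dt (loss_grad (dt * d) \<nu> x y) j = c) \<and>
       (\<forall>j\<in>{d div 2 + 1..d}. block_norm dt (loss_grad (dt * d) \<nu> x y) j = 0))"
proof -
  define m where "m = d div 2"
  have d: "d = 2 * m" and m: "1 \<le> m" using assms(1,2) unfolding m_def by auto
  have "\<eta> * (10 * real d) < 1" using assms(2,6) by (simp add: field_simps)
  hence u: "sqrt (\<Sum>k<dt. (u k)\<^sup>2) = 1" and \<eta>: "0 \<le> \<eta>" "20 * m * \<eta> < 1"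
    using assms(4,5) d by (simp_all add: algebra_simps)
  define \<tau> where "\<tau> = 1 - m * \<eta>"
  define \<alpha> where "\<alpha> = 1 / sqrt (2 * (m + \<tau>\<^sup>2))"
  define \<nu> where "\<nu> = antipodal_net (dt * d) (1 / sqrt 2) (\<lambda>n. \<alpha> * signal dt m u n) (\<alpha> * \<tau>)"
  have \<tau>: "0 < \<tau>" "\<tau> \<le> 1 - m * \<eta>" and \<alpha>: "0 < \<alpha>"
    using m \<eta> unfolding \<tau>_def \<alpha>_def by (auto simp: add_pos_nonneg)
  have "max_margin d dt u \<eta> \<nu>"
    unfolding \<nu>_def \<alpha>_def \<tau>_def by (rule antipodal_signal_net_max_margin[OF d m u \<eta>])
  moreover have "\<exists>c > 0. (\<forall>j\<in>{1..d div 2}. block_norm dt (loss_grad (dt * d) \<nu> x y) j = c) \<and>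
       (\<forall>j\<in>{d div 2 + 1..d}. block_norm dt (loss_grad (dt * d) \<nu> x y) j = 0)"
    if xy: "(x, y) \<in> data_support d dt u \<eta>" for x y
  proof -
    obtain C where C: "C \<noteq> 0" and grad: "\<forall>n<dt * d. loss_grad (dt * d) \<nu> x y n = C * signal dt m u n"
      using loss_grad_antipodal_signal_net[OF d u \<eta>(1) _ \<alpha> \<tau> xy, of "1 / sqrt 2"] unfolding \<nu>_def by auto
    show ?thesis
      using C block_norm_signal_mult[OF d u grad] unfolding m_def[symmetric]
      by (intro exI[of _ "\<bar>C\<bar>"]) auto
  qed
  ultimately show ?thesis by blast
qed

end
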